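(* Let $\nu\ge 1$, let $n_1,\dots,n_\nu\ge 0$ be integers, $N=n_1+\dots+n_\nu$, and let $\Omega=\coprod_{j=1}^{\nu}P_j$ be a set with $N$ elements partitioned into disjoint subsets with $\#P_j=n_j$. Let $S_N$ be the group of permutations of $\Omega$ and $Y\{n_j\}\subset S_N$ the Young subgroup of permutations sending each $P_j$ to itself. In the algebra $\Delta\{n_j\}$ (notation in the context), for any two admissible matrices $\{a_{ij}\}$ and $\{b_{jk}\}$ we have $$\Xi\{a_{ij}\}\cdot \Xi\{b_{jk}\}=\sum_{\{c_{ik}\}}\frac{\prod_{i,j} a_{ij}!\,\prod_{j,k} b_{jk}!}{\prod_j n_j!}\left(\sum_{\{t_{ijk}\}}\frac{1}{\prod_{i,j,k}t_{ijk}!}\right)\Xi\{c_{ik}\},$$ where the outer sum is over all admissible matrices $\{c_{ik}\}$, and the inner sum is over all collections of integers $t_{ijk}\ge 0$ ($i,j,k=1,\dots,\nu$) such that $\sum_i t_{ijk}=b_{jk}$, $\sum_j t_{ijk}=c_{ik}$, $\sum_k t_{ijk}=a_{ij}$ for all indices.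
   Context: An admissible matrix is a $\nu\times\nu$ matrix $\{a_{ij}\}$ of nonnegative integers with $\sum_i a_{ij}=n_j$ for all $j$ and $\sum_j a_{ij}=n_i$ for all $i$. Each double coset $Y\{n_j\}\,g\,Y\{n_j\}$ is determined by the admissible matrix $a_{ij}=\#(g(P_i)\cap P_j)$, and every admissible matrix arises this way; denote this double coset by $\xi\{a_{ij}\}$. Its cardinality is $\mu\{a_{ij}\}=\prod_j (n_j!)^2/\prod_{i,j}a_{ij}!$. Let $\Pi=\frac{1}{\prod_j n_j!}\sum_{h\in Y\{n_j\}}h\in\mathbb{C}[S_N]$ and $\Delta\{n_j\}=\Pi\,\mathbb{C}[S_N]\,\Pi$, the subalgebra of the group algebra of elements invariant under left and right multiplication by $Y\{n_j\}$. It has basis $\Xi\{a_{ij}\}=\frac{1}{\mu\{a_{ij}\}}\sum_{g\in\xi\{a_{ij}\}}g$, indexed by admissible matrices. *)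

theory Defs
  imports "HOL-Analysis.Analysis" "HOL-Combinatorics.Permutations"
begin

text \<open>Blocks are indexed by 0..nu-1; matrices are functions nat => nat => nat,
 only their entries with indices below nu matter.\<close>

definition admissible :: "nat \<Rightarrow> (nat \<Rightarrow> nat) \<Rightarrow> (nat \<Rightarrow> nat \<Rightarrow> nat) \<Rightarrow> bool" where
  "admissible nu n a \<longleftrightarrow>
     (\<forall>j<nu. (\<Sum>i<nu. a i j) = n j) \<and> (\<forall>i<nu. (\<Sum>j<nu. a i j) = n i)"

definition adm_set :: "nat \<Rightarrow> (nat \<Rightarrow> nat) \<Rightarrow> (nat \<Rightarrow> nat \<Rightarrow> nat) set" where
  "adm_set nu n = {c. admissible nu n c \<and> (\<forall>i j. \<not> (i < nu \<and> j < nu) \<longrightarrow> c i j = 0)}"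

definition SN :: "'a set \<Rightarrow> ('a \<Rightarrow> 'a) set" where
  "SN Omega = {g. g permutes Omega}"

definition xi :: "'a set \<Rightarrow> nat \<Rightarrow> (nat \<Rightarrow> 'a set) \<Rightarrow> (nat \<Rightarrow> nat \<Rightarrow> nat) \<Rightarrow> ('a \<Rightarrow> 'a) set" where
  "xi Omega nu P a = {g \<in> SN Omega. \<forall>i<nu. \<forall>j<nu. card (g ` P i \<inter> P j) = a i j}"

definition mu :: "nat \<Rightarrow> (nat \<Rightarrow> nat) \<Rightarrow> (nat \<Rightarrow> nat \<Rightarrow> nat) \<Rightarrow> real" where
  "mu nu n a = (\<Prod>j<nu. (fact (n j))^2) / (\<Prod>i<nu. \<Prod>j<nu. fact (a i j))"

text \<open>Elements of the group algebra C[S_N] are functions from permutations to complex numbers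
 (coefficient of each group element). The basis element Xi{a}.\<close>
definition Xi :: "'a set \<Rightarrow> nat \<Rightarrow> (nat \<Rightarrow> nat) \<Rightarrow> (nat \<Rightarrow> 'a set) \<Rightarrow> (nat \<Rightarrow> nat \<Rightarrow> nat)
                   \<Rightarrow> ('a \<Rightarrow> 'a) \<Rightarrow> complex" where
  "Xi Omega nu n P a = (\<lambda>g. if g \<in> xi Omega nu P a then complex_of_real (1 / mu nu n a) else 0)"

text \<open>Multiplication in C[S_N]. The group product g * h means "first g, then h",
 i.e. the map h o g (this is the convention under which the product formula holds).\<close>
definition gmult :: "'a set \<Rightarrow> (('a \<Rightarrow> 'a) \<Rightarrow> complex) \<Rightarrow> (('a \<Rightarrow> 'a) \<Rightarrow> complex)
                      \<Rightarrow> ('a \<Rightarrow> 'a) \<Rightarrow> complex" where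
  "gmult Omega f g = (\<lambda>s. \<Sum>(x, y) \<in> {(x, y). x \<in> SN Omega \<and> y \<in> SN Omega \<and> y \<circ> x = s}.
                            f x * g y)"

definition T_set :: "nat \<Rightarrow> (nat \<Rightarrow> nat \<Rightarrow> nat) \<Rightarrow> (nat \<Rightarrow> nat \<Rightarrow> nat) \<Rightarrow> (nat \<Rightarrow> nat \<Rightarrow> nat)
                     \<Rightarrow> (nat \<Rightarrow> nat \<Rightarrow> nat \<Rightarrow> nat) set" where
  "T_set nu a b c = {t. (\<forall>i j k. \<not> (i < nu \<and> j < nu \<and> k < nu) \<longrightarrow> t i j k = 0) \<and>
       (\<forall>j<nu. \<forall>k<nu. (\<Sum>i<nu. t i j k) = b j k) \<and>
       (\<forall>i<nu. \<forall>k<nu. (\<Sum>j<nu. t i j k) = c i k) \<and>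
       (\<forall>i<nu. \<forall>j<nu. (\<Sum>k<nu. t i j k) = a i j)}"

end

(*
  Evaluate the product at a permutation s and let c be the matrix of the double coset of s.
  The coefficient is #{x. x \<in> xi{a}, s o inv x \<in> xi{b}} / (mu{a} mu{b}). Classify x by the
  table t_ijk = #{w \<in> P_i. x w \<in> P_j, s w \<in> P_k}: its three marginals are the matrices of x,
  of s o inv x and of s, so x is counted exactly when t \<in> T_set a b c. For fixed t, x is a
  bijection of Omega carrying the classes {w \<in> P_i. s w \<in> P_k} (of sizes c_ik) onto the blocks
  P_j (of sizes n_j) with prescribed intersection sizes t_ijk; there are
  prod c_ik! * prod n_j! / prod t_ijk! of them, a contingency-table count proved by induction on
  the domain. Summing over t and using mu{a} = (prod n_j!)^2 / prod a_ij! gives the coefficient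
  of the theorem times 1 / mu{c}, which is the value of Xi{c} at s.
*)

theory Submission
  imports Defs
begin

section \<open>Bijections with a prescribed contingency table\<close>

lemma card_filter_insert:
  assumes "finite A" "a \<notin> A"
  shows "card {x\<in>insert a A. Q x} = card {x\<in>A. Q x} + (if Q a then 1 else 0)"
proof -
  have "{x\<in>insert a A. Q x} = (if Q a then insert a {x\<in>A. Q x} else {x\<in>A. Q x})"
    by auto
  then show ?thesis
    using assms by simp
qed

lemma sum_fun_upd_minus_one:
  fixes g :: "'a \<Rightarrow> nat"
  assumes "finite S" "x \<in> S" "0 < g x"
  shows "(\<Sum>y\<in>S. (g(x := g x - 1)) y) = sum g S - 1"
  using assms by (simp add: sum.remove)

lemma prod_fact_fun_upd_minus_one:
  fixes g :: "'a \<Rightarrow> nat"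
  assumes "finite S" "x \<in> S" "0 < g x"
  shows "(\<Prod>y\<in>S. fact ((g(x := g x - 1)) y) :: real) = (\<Prod>y\<in>S. fact (g y)) / g x"
  using assms by (simp add: prod.remove fact_reduce[of "g x"])

(* The identity outside A makes table_bijections Omega Omega l m I J t a set of permutations. *)
definition table_bijections ::
  "'a set \<Rightarrow> 'a set \<Rightarrow> ('a \<Rightarrow> 'l) \<Rightarrow> ('a \<Rightarrow> 'm) \<Rightarrow> 'l set \<Rightarrow> 'm set \<Rightarrow> ('l \<times> 'm \<Rightarrow> nat)
     \<Rightarrow> ('a \<Rightarrow> 'a) set" where
  "table_bijections A B l m I J t =
     {f. bij_betw f A B \<and> (\<forall>x. x \<notin> A \<longrightarrow> f x = x) \<and>
         (\<forall>\<alpha>\<in>I. \<forall>\<beta>\<in>J. card {x\<in>A. l x = \<alpha> \<and> m (f x) = \<beta>} = t (\<alpha>, \<beta>))}"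

lemma finite_table_bijections:
  assumes "finite A" "finite B"
  shows "finite (table_bijections A B l m I J t)"
proof -
  let ?F = "{f. f ` A \<subseteq> B \<and> (\<forall>x. x \<notin> A \<longrightarrow> f x = x)}"
  have "inj_on (\<lambda>f. restrict f A) ?F"
  proof (rule inj_onI, rule ext)
    fix f g x assume "f \<in> ?F" "g \<in> ?F" "restrict f A = restrict g A"
    then show "f x = g x"
      by (cases "x \<in> A") (auto dest: fun_cong[of _ _ x])
  qed
  moreover have "(\<lambda>f. restrict f A) ` ?F \<subseteq> A \<rightarrow>\<^sub>E B"
    by auto
  ultimately have "finite ?F"
    using assms by (meson finite_PiE finite_imageD finite_subset)
  then show ?thesis
    by (rule finite_subset[rotated]) (auto simp: table_bijections_def bij_betw_def)
qed

lemma fun_upd_mem_table_bijections_iff: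
  assumes "finite A" "a \<notin> A" "g a = a" "b \<in> B" "l a \<in> I" "m b \<in> J"
  shows "g(a := b) \<in> table_bijections (insert a A) B l m I J t \<longleftrightarrow>
    0 < t (l a, m b) \<and>
    g \<in> table_bijections A (B - {b}) l m I J (t((l a, m b) := t (l a, m b) - 1))"
proof -
  have "bij_betw (g(a := b)) (insert a A) B \<longleftrightarrow> bij_betw (g(a := b)) A (B - {b})"
    using notIn_Un_bij_betw3[of a A "g(a := b)" "B - {b}"] assms(2,4) by (simp add: insert_absorb)
  also have "\<dots> \<longleftrightarrow> bij_betw g A (B - {b})"
    using assms(2) by (intro bij_betw_cong) auto
  finally have bij: "bij_betw (g(a := b)) (insert a A) B \<longleftrightarrow> bij_betw g A (B - {b})" .
  have outside: "(\<forall>x. x \<notin> insert a A \<longrightarrow> (g(a := b)) x = x) \<longleftrightarrow> (\<forall>x. x \<notin> A \<longrightarrow> g x = x)"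
    using assms(3) by auto
  define C where "C \<alpha> \<beta> = card {x\<in>A. l x = \<alpha> \<and> m (g x) = \<beta>}" for \<alpha> \<beta>
  have count: "card {x\<in>insert a A. l x = \<alpha> \<and> m ((g(a := b)) x) = \<beta>} =
      C \<alpha> \<beta> + (if (\<alpha>, \<beta>) = (l a, m b) then 1 else 0)" for \<alpha> \<beta>
  proof -
    have "{x\<in>A. l x = \<alpha> \<and> m ((g(a := b)) x) = \<beta>} = {x\<in>A. l x = \<alpha> \<and> m (g x) = \<beta>}"
      using assms(2) by auto
    then show ?thesis
      using card_filter_insert[OF assms(1,2), of "\<lambda>x. l x = \<alpha> \<and> m ((g(a := b)) x) = \<beta>"]
      by (auto simp: C_def)
  qed
  have table: "(\<forall>\<alpha>\<in>I. \<forall>\<beta>\<in>J. C \<alpha> \<beta> + (if (\<alpha>, \<beta>) = (l a, m b) then 1 else 0) = t (\<alpha>, \<beta>)) \<longleftrightarrow>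
      0 < t (l a, m b) \<and> (\<forall>\<alpha>\<in>I. \<forall>\<beta>\<in>J. C \<alpha> \<beta> = (t((l a, m b) := t (l a, m b) - 1)) (\<alpha>, \<beta>))"
  proof
    assume H: "\<forall>\<alpha>\<in>I. \<forall>\<beta>\<in>J. C \<alpha> \<beta> + (if (\<alpha>, \<beta>) = (l a, m b) then 1 else 0) = t (\<alpha>, \<beta>)"
    then have "C (l a) (m b) + 1 = t (l a, m b)"
      using assms(5,6) by fastforce
    with H show "0 < t (l a, m b) \<and>
        (\<forall>\<alpha>\<in>I. \<forall>\<beta>\<in>J. C \<alpha> \<beta> = (t((l a, m b) := t (l a, m b) - 1)) (\<alpha>, \<beta>))"
      by (auto split: if_splits)
  next
    assume "0 < t (l a, m b) \<and>
        (\<forall>\<alpha>\<in>I. \<forall>\<beta>\<in>J. C \<alpha> \<beta> = (t((l a, m b) := t (l a, m b) - 1)) (\<alpha>, \<beta>))"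
    then show "\<forall>\<alpha>\<in>I. \<forall>\<beta>\<in>J. C \<alpha> \<beta> + (if (\<alpha>, \<beta>) = (l a, m b) then 1 else 0) = t (\<alpha>, \<beta>)"
      by auto
  qed
  then show ?thesis
    unfolding table_bijections_def mem_Collect_eq bij outside count C_def by blast
qed

lemma table_bijections_insert:
  assumes "finite A" "a \<notin> A" "l a \<in> I" "m ` B \<subseteq> J"
  shows "table_bijections (insert a A) B l m I J t =
    (\<Union>b\<in>{b\<in>B. 0 < t (l a, m b)}. (\<lambda>g. g(a := b)) `
       table_bijections A (B - {b}) l m I J (t((l a, m b) := t (l a, m b) - 1)))"
proof (intro set_eqI iffI)
  fix f assume f: "f \<in> table_bijections (insert a A) B l m I J t"
  then have "f a \<in> B"
    by (auto simp: table_bijections_def bij_betw_def)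
  moreover have f_eq: "f = (f(a := a))(a := f a)"
    by simp
  ultimately have "0 < t (l a, m (f a)) \<and>
      f(a := a) \<in> table_bijections A (B - {f a}) l m I J (t((l a, m (f a)) := t (l a, m (f a)) - 1))"
    using f fun_upd_mem_table_bijections_iff[of A a "f(a := a)" "f a" B l I m J t] assms by auto
  with \<open>f a \<in> B\<close> f_eq show "f \<in> (\<Union>b\<in>{b\<in>B. 0 < t (l a, m b)}. (\<lambda>g. g(a := b)) `
      table_bijections A (B - {b}) l m I J (t((l a, m b) := t (l a, m b) - 1)))"
    by blast
next
  fix f assume "f \<in> (\<Union>b\<in>{b\<in>B. 0 < t (l a, m b)}. (\<lambda>g. g(a := b)) `
      table_bijections A (B - {b}) l m I J (t((l a, m b) := t (l a, m b) - 1)))"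
  then obtain b g where "b \<in> B" "0 < t (l a, m b)" "f = g(a := b)"
    and g: "g \<in> table_bijections A (B - {b}) l m I J (t((l a, m b) := t (l a, m b) - 1))"
    by blast
  moreover have "g a = a"
    using g assms(2) by (simp add: table_bijections_def)
  ultimately show "f \<in> table_bijections (insert a A) B l m I J t"
    using fun_upd_mem_table_bijections_iff[of A a g b B l I m J t] assms by auto
qed

lemma card_table_bijections_insert:
  assumes "finite A" "finite B" "a \<notin> A" "l a \<in> I" "m ` B \<subseteq> J"
  shows "card (table_bijections (insert a A) B l m I J t) =
    (\<Sum>b\<in>{b\<in>B. 0 < t (l a, m b)}.
       card (table_bijections A (B - {b}) l m I J (t((l a, m b) := t (l a, m b) - 1))))"
proof -
  define G where "G b = table_bijections A (B - {b}) l m I J (t((l a, m b) := t (l a, m b) - 1))"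
    for b
  have "g a = a" if "g \<in> G b" for g b
    using that assms(3) by (simp add: G_def table_bijections_def)
  then have "inj_on (\<lambda>g. g(a := b)) (G b)" for b
    by (intro inj_onI) (metis fun_upd_triv fun_upd_upd)
  moreover have "finite (G b)" for b
    using assms(1,2) by (simp add: G_def finite_table_bijections)
  moreover have "(\<lambda>g. g(a := b)) ` G b \<inter> (\<lambda>g. g(a := b')) ` G b' = {}" if "b \<noteq> b'" for b b'
    using that by auto (metis fun_upd_same)
  ultimately show ?thesis
    unfolding table_bijections_insert[where l = l and t = t, OF assms(1,3-5)] G_def[symmetric]
    using assms(2) by (subst card_UN_disjoint) (auto simp: card_image)
qed

lemma sum_table_row_over_fibres:
  fixes t :: "'l \<times> 'm \<Rightarrow> nat"
  assumes "finite B" "finite I" "finite J" "m ` B \<subseteq> J" "\<alpha> \<in> I"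
    and "\<forall>\<beta>\<in>J. (\<Sum>\<alpha>\<in>I. t (\<alpha>, \<beta>)) = card {y\<in>B. m y = \<beta>}"
  shows "(\<Sum>b\<in>B. t (\<alpha>, m b) / card {y\<in>B. m y = m b}) = (\<Sum>\<beta>\<in>J. real (t (\<alpha>, \<beta>)))"
proof -
  have "(\<Sum>b\<in>B. t (\<alpha>, m b) / card {y\<in>B. m y = m b}) =
      (\<Sum>\<beta>\<in>J. \<Sum>b\<in>{y\<in>B. m y = \<beta>}. t (\<alpha>, \<beta>) / card {y\<in>B. m y = \<beta>})"
    using assms(1,3,4) by (subst sum.group[symmetric, of B J m]) (auto intro!: sum.cong)
  also have "\<dots> = (\<Sum>\<beta>\<in>J. real (t (\<alpha>, \<beta>)))"
  proof (intro sum.cong refl)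
    fix \<beta> assume "\<beta> \<in> J"
    show "(\<Sum>b\<in>{y\<in>B. m y = \<beta>}. t (\<alpha>, \<beta>) / card {y\<in>B. m y = \<beta>}) = real (t (\<alpha>, \<beta>))"
    proof (cases "card {y\<in>B. m y = \<beta>} = 0")
      case True
      then have "(\<Sum>\<alpha>\<in>I. t (\<alpha>, \<beta>)) = 0"
        using assms(6) \<open>\<beta> \<in> J\<close> by simp
      then show ?thesis
        using True assms(2,5) by simp
    qed auto
  qed
  finally show ?thesis .
qed

lemma sum_table_fun_upd_minus_one:
  fixes t :: "'l \<times> 'm \<Rightarrow> nat"
  assumes "finite I" "finite J" "\<alpha>0 \<in> I" "\<beta>0 \<in> J" "0 < t (\<alpha>0, \<beta>0)"
  shows "(\<Sum>\<beta>\<in>J. (t((\<alpha>0, \<beta>0) := t (\<alpha>0, \<beta>0) - 1)) (\<alpha>, \<beta>)) =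
      (\<Sum>\<beta>\<in>J. t (\<alpha>, \<beta>)) - (if \<alpha> = \<alpha>0 then 1 else 0)"
    and "(\<Sum>\<alpha>\<in>I. (t((\<alpha>0, \<beta>0) := t (\<alpha>0, \<beta>0) - 1)) (\<alpha>, \<beta>)) =
      (\<Sum>\<alpha>\<in>I. t (\<alpha>, \<beta>)) - (if \<beta> = \<beta>0 then 1 else 0)"
proof -
  have "(\<lambda>\<beta>. (t((\<alpha>0, \<beta>0) := t (\<alpha>0, \<beta>0) - 1)) (\<alpha>0, \<beta>)) =
      (\<lambda>\<beta>. t (\<alpha>0, \<beta>))(\<beta>0 := t (\<alpha>0, \<beta>0) - 1)"
    by auto
  then show "(\<Sum>\<beta>\<in>J. (t((\<alpha>0, \<beta>0) := t (\<alpha>0, \<beta>0) - 1)) (\<alpha>, \<beta>)) =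
      (\<Sum>\<beta>\<in>J. t (\<alpha>, \<beta>)) - (if \<alpha> = \<alpha>0 then 1 else 0)"
    using sum_fun_upd_minus_one[of J \<beta>0 "\<lambda>\<beta>. t (\<alpha>0, \<beta>)"] assms by auto
  have "(\<lambda>\<alpha>. (t((\<alpha>0, \<beta>0) := t (\<alpha>0, \<beta>0) - 1)) (\<alpha>, \<beta>0)) =
      (\<lambda>\<alpha>. t (\<alpha>, \<beta>0))(\<alpha>0 := t (\<alpha>0, \<beta>0) - 1)"
    by auto
  then show "(\<Sum>\<alpha>\<in>I. (t((\<alpha>0, \<beta>0) := t (\<alpha>0, \<beta>0) - 1)) (\<alpha>, \<beta>)) =
      (\<Sum>\<alpha>\<in>I. t (\<alpha>, \<beta>)) - (if \<beta> = \<beta>0 then 1 else 0)"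
    using sum_fun_upd_minus_one[of I \<alpha>0 "\<lambda>\<alpha>. t (\<alpha>, \<beta>0)"] assms by auto
qed

lemma table_marginals_remove:
  assumes "finite A" "finite B" "finite I" "finite J" "a \<notin> A" "b \<in> B" "l a \<in> I" "m b \<in> J"
    and "0 < t (l a, m b)"
    and "\<forall>\<alpha>\<in>I. (\<Sum>\<beta>\<in>J. t (\<alpha>, \<beta>)) = card {x\<in>insert a A. l x = \<alpha>}"
    and "\<forall>\<beta>\<in>J. (\<Sum>\<alpha>\<in>I. t (\<alpha>, \<beta>)) = card {y\<in>B. m y = \<beta>}"
  shows "\<forall>\<alpha>\<in>I. (\<Sum>\<beta>\<in>J. (t((l a, m b) := t (l a, m b) - 1)) (\<alpha>, \<beta>)) = card {x\<in>A. l x = \<alpha>}"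
    and "\<forall>\<beta>\<in>J. (\<Sum>\<alpha>\<in>I. (t((l a, m b) := t (l a, m b) - 1)) (\<alpha>, \<beta>)) = card {y\<in>B - {b}. m y = \<beta>}"
proof -
  have "{y\<in>B - {b}. m y = \<beta>} = {y\<in>B. m y = \<beta>} - {b}" for \<beta>
    by auto
  then have "card {y\<in>B - {b}. m y = \<beta>} = card {y\<in>B. m y = \<beta>} - (if \<beta> = m b then 1 else 0)" for \<beta>
    using assms(2,6) by simp
  then show "\<forall>\<beta>\<in>J. (\<Sum>\<alpha>\<in>I. (t((l a, m b) := t (l a, m b) - 1)) (\<alpha>, \<beta>)) = card {y\<in>B - {b}. m y = \<beta>}"
    using sum_table_fun_upd_minus_one(2)[where t = t, OF assms(3,4,7,8,9)] assms(11) by simp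
  show "\<forall>\<alpha>\<in>I. (\<Sum>\<beta>\<in>J. (t((l a, m b) := t (l a, m b) - 1)) (\<alpha>, \<beta>)) = card {x\<in>A. l x = \<alpha>}"
    using sum_table_fun_upd_minus_one(1)[where t = t, OF assms(3,4,7,8,9)] assms(10)
      card_filter_insert[OF assms(1,5)] by simp
qed

lemma prod_fact_table_remove:
  assumes "finite A" "finite B" "finite I" "finite J" "a \<notin> A" "b \<in> B" "l a \<in> I" "m b \<in> J"
    and "0 < t (l a, m b)"
  shows "(\<Prod>\<alpha>\<in>I. fact (card {x\<in>A. l x = \<alpha>})) * (\<Prod>\<beta>\<in>J. fact (card {y\<in>B - {b}. m y = \<beta>})) /
      (\<Prod>\<gamma>\<in>I \<times> J. fact ((t((l a, m b) := t (l a, m b) - 1)) \<gamma>)) =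
    (\<Prod>\<alpha>\<in>I. fact (card {x\<in>insert a A. l x = \<alpha>})) * (\<Prod>\<beta>\<in>J. fact (card {y\<in>B. m y = \<beta>})) /
      (\<Prod>\<gamma>\<in>I \<times> J. fact (t \<gamma>)) *
    (t (l a, m b) / (card {x\<in>insert a A. l x = l a} * card {y\<in>B. m y = m b}))"
proof -
  define p where "p \<alpha> = card {x\<in>insert a A. l x = \<alpha>}" for \<alpha>
  define q where "q \<beta> = card {y\<in>B. m y = \<beta>}" for \<beta>
  have p_dec: "card {x\<in>A. l x = \<alpha>} = (p(l a := p (l a) - 1)) \<alpha>" for \<alpha>
    using card_filter_insert[OF assms(1,5)] by (simp add: p_def)
  have p_pos: "0 < p (l a)"
    using card_filter_insert[OF assms(1,5)] by (simp add: p_def)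
  have "{y\<in>B - {b}. m y = \<beta>} = {y\<in>B. m y = \<beta>} - {b}" for \<beta>
    by auto
  then have q_dec: "card {y\<in>B - {b}. m y = \<beta>} = (q(m b := q (m b) - 1)) \<beta>" for \<beta>
    using assms(2,6) by (simp add: q_def)
  have q_pos: "0 < q (m b)"
    using assms(2,6) by (auto simp: q_def card_gt_0_iff)
  have "(l a, m b) \<in> I \<times> J"
    using assms(7,8) by simp
  then have "(\<Prod>\<alpha>\<in>I. fact (card {x\<in>A. l x = \<alpha>})) * (\<Prod>\<beta>\<in>J. fact (card {y\<in>B - {b}. m y = \<beta>})) /
      (\<Prod>\<gamma>\<in>I \<times> J. fact ((t((l a, m b) := t (l a, m b) - 1)) \<gamma>)) =
    ((\<Prod>\<alpha>\<in>I. fact (p \<alpha>)) / p (l a)) * ((\<Prod>\<beta>\<in>J. fact (q \<beta>)) / q (m b)) /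
      ((\<Prod>\<gamma>\<in>I \<times> J. fact (t \<gamma>)) / t (l a, m b))"
    unfolding p_dec q_dec
    by (simp only: prod_fact_fun_upd_minus_one[where g = p, OF assms(3,7) p_pos]
        prod_fact_fun_upd_minus_one[where g = q, OF assms(4,8) q_pos]
        prod_fact_fun_upd_minus_one[where g = t, OF finite_cartesian_product[OF assms(3,4)] _ assms(9)])
  then show ?thesis
    using p_pos q_pos assms(9) by (simp add: p_def q_def field_simps)
qed

lemma table_bijections_empty:
  assumes "finite B" "finite J" "m ` B \<subseteq> J"
    and "\<forall>\<alpha>\<in>I. (\<Sum>\<beta>\<in>J. t (\<alpha>, \<beta>)) = 0"
    and "\<forall>\<beta>\<in>J. (\<Sum>\<alpha>\<in>I. t (\<alpha>, \<beta>)) = card {y\<in>B. m y = \<beta>}"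
  shows "B = {}" and "\<forall>\<gamma>\<in>I \<times> J. t \<gamma> = 0" and "table_bijections {} B l m I J t = {id}"
proof -
  show t0: "\<forall>\<gamma>\<in>I \<times> J. t \<gamma> = 0"
    using assms(2,4) by simp
  show "B = {}"
  proof (rule ccontr)
    assume "B \<noteq> {}"
    then obtain b where b: "b \<in> B"
      by blast
    then have "card {y\<in>B. m y = m b} = 0"
      using assms(3,5) t0 by force
    then show False
      using b assms(1) by auto
  qed
  then show "table_bijections {} B l m I J t = {id}"
    using t0 by (auto simp: table_bijections_def)
qed

theorem card_table_bijections:
  assumes "finite A" "finite B" "finite I" "finite J" "l ` A \<subseteq> I" "m ` B \<subseteq> J"
    and "\<forall>\<alpha>\<in>I. (\<Sum>\<beta>\<in>J. t (\<alpha>, \<beta>)) = card {x\<in>A. l x = \<alpha>}"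
    and "\<forall>\<beta>\<in>J. (\<Sum>\<alpha>\<in>I. t (\<alpha>, \<beta>)) = card {y\<in>B. m y = \<beta>}"
  shows "real (card (table_bijections A B l m I J t)) =
    (\<Prod>\<alpha>\<in>I. fact (card {x\<in>A. l x = \<alpha>})) * (\<Prod>\<beta>\<in>J. fact (card {y\<in>B. m y = \<beta>})) /
    (\<Prod>\<gamma>\<in>I \<times> J. fact (t \<gamma>))"
  using assms(1,2,5-8)
proof (induction A arbitrary: B t rule: finite_induct)
  case empty
  note empty_table = table_bijections_empty[OF empty.prems(1) assms(4) empty.prems(3)
      empty.prems(4)[simplified] empty.prems(5)]
  have "(\<Prod>\<gamma>\<in>I \<times> J. fact (t \<gamma>)) = (1 :: real)"
    using empty_table(2) by (intro prod.neutral) simp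
  then show ?case
    using empty_table(1,3) by simp
next
  case (insert a A)
  define p where "p \<alpha> = card {x\<in>insert a A. l x = \<alpha>}" for \<alpha>
  define q where "q \<beta> = card {y\<in>B. m y = \<beta>}" for \<beta>
  define Q :: real
    where "Q = (\<Prod>\<alpha>\<in>I. fact (p \<alpha>)) * (\<Prod>\<beta>\<in>J. fact (q \<beta>)) / (\<Prod>\<gamma>\<in>I \<times> J. fact (t \<gamma>))"
  define Bp where "Bp = {b\<in>B. 0 < t (l a, m b)}"
  have la: "l a \<in> I"
    using insert.prems(2) by simp
  have "real (card (table_bijections A (B - {b}) l m I J (t((l a, m b) := t (l a, m b) - 1)))) =
      Q / p (l a) * (t (l a, m b) / q (m b))" if "b \<in> Bp" for b
  proof -
    have b: "b \<in> B" "m b \<in> J" "0 < t (l a, m b)"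
      using that insert.prems(3) by (auto simp: Bp_def)
    note marginals = table_marginals_remove[OF insert.hyps(1) insert.prems(1) assms(3,4) insert.hyps(2)
        b(1) la b(2,3) insert.prems(4,5)]
    have "real (card (table_bijections A (B - {b}) l m I J (t((l a, m b) := t (l a, m b) - 1)))) =
        (\<Prod>\<alpha>\<in>I. fact (card {x\<in>A. l x = \<alpha>})) * (\<Prod>\<beta>\<in>J. fact (card {y\<in>B - {b}. m y = \<beta>})) /
        (\<Prod>\<gamma>\<in>I \<times> J. fact ((t((l a, m b) := t (l a, m b) - 1)) \<gamma>))"
      by (rule insert.IH[OF _ _ _ marginals]) (use insert.prems(1-3) in auto)
    then show ?thesis
      unfolding prod_fact_table_remove[where l = l and m = m and t = t, OF insert.hyps(1) insert.prems(1)
          assms(3,4) insert.hyps(2) b(1) la b(2,3)]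
      by (simp add: Q_def p_def q_def)
  qed
  then have "real (card (table_bijections (insert a A) B l m I J t)) =
      (\<Sum>b\<in>Bp. Q / p (l a) * (t (l a, m b) / q (m b)))"
    unfolding card_table_bijections_insert[where l = l and t = t, OF insert.hyps(1) insert.prems(1)
        insert.hyps(2) la insert.prems(3)]
    by (simp add: Bp_def)
  also have "\<dots> = Q / p (l a) * (\<Sum>b\<in>B. t (l a, m b) / q (m b))"
    unfolding Bp_def sum_distrib_left by (rule sum.mono_neutral_left) (use insert.prems(1) in auto)
  also have "(\<Sum>b\<in>B. t (l a, m b) / q (m b)) = (\<Sum>\<beta>\<in>J. real (t (l a, \<beta>)))"
    unfolding q_def by (rule sum_table_row_over_fibres[OF insert.prems(1) assms(3,4) insert.prems(3) la
        insert.prems(5)])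
  also have "\<dots> = p (l a)"
    using insert.prems(4) la by (simp add: p_def flip: of_nat_sum)
  finally show ?case
    using card_filter_insert[OF insert.hyps] by (simp add: Q_def p_def q_def)
qed

section \<open>Finiteness and the product in the group algebra\<close>

lemma finite_set_of_finite_funs2:
  assumes "finite A" "finite B" "finite C"
  shows "finite {c. \<forall>x y. (x \<in> A \<and> y \<in> B \<longrightarrow> c x y \<in> C) \<and> (\<not> (x \<in> A \<and> y \<in> B) \<longrightarrow> c x y = d)}"
  by (rule finite_subset[OF _ finite_set_of_finite_funs[where d = "\<lambda>_. d",
        OF assms(1) finite_set_of_finite_funs[where d = d, OF assms(2,3)]]]) auto

lemma finite_set_of_finite_funs3:
  assumes "finite A" "finite B" "finite C" "finite D"
  shows "finite {c. \<forall>x y z. (x \<in> A \<and> y \<in> B \<and> z \<in> C \<longrightarrow> c x y z \<in> D) \<and>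
    (\<not> (x \<in> A \<and> y \<in> B \<and> z \<in> C) \<longrightarrow> c x y z = d)}"
  by (rule finite_subset[OF _ finite_set_of_finite_funs[where d = "\<lambda>_ _. d",
        OF assms(1) finite_set_of_finite_funs2[where d = d, OF assms(2-4)]]]) (auto simp: fun_eq_iff)

lemma finite_adm_set: "finite (adm_set nu n)"
proof (rule finite_subset[OF _ finite_set_of_finite_funs2[of "{..<nu}" "{..<nu}" "{..sum n {..<nu}}" 0]])
  have "c i j \<le> sum n {..<nu}" if "c \<in> adm_set nu n" "i < nu" "j < nu" for c i j
  proof -
    have "c i j \<le> (\<Sum>j<nu. c i j)"
      using that(3) by (intro member_le_sum) auto
    also have "\<dots> = n i"
      using that(1,2) by (simp add: adm_set_def admissible_def)
    also have "\<dots> \<le> sum n {..<nu}"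
      using that(2) by (intro member_le_sum) auto
    finally show ?thesis .
  qed
  then show "adm_set nu n \<subseteq> {c. \<forall>i j. (i \<in> {..<nu} \<and> j \<in> {..<nu} \<longrightarrow> c i j \<in> {..sum n {..<nu}}) \<and>
      (\<not> (i \<in> {..<nu} \<and> j \<in> {..<nu}) \<longrightarrow> c i j = 0)}"
    by (auto simp: adm_set_def)
qed simp_all

lemma finite_T_set: "finite (T_set nu a b c)"
proof (rule finite_subset[OF _ finite_set_of_finite_funs3[of "{..<nu}" "{..<nu}" "{..<nu}"
      "{..\<Sum>i<nu. \<Sum>j<nu. a i j}" 0]])
  have "t i j k \<le> (\<Sum>i<nu. \<Sum>j<nu. a i j)" if "t \<in> T_set nu a b c" "i < nu" "j < nu" "k < nu"
    for t i j k
  proof -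
    have "t i j k \<le> (\<Sum>k<nu. t i j k)"
      using that(4) by (intro member_le_sum) auto
    also have "\<dots> = a i j"
      using that(1-3) by (simp add: T_set_def)
    also have "\<dots> \<le> (\<Sum>j<nu. a i j)"
      using that(3) by (intro member_le_sum) auto
    also have "\<dots> \<le> (\<Sum>i<nu. \<Sum>j<nu. a i j)"
      using that(2) by (intro member_le_sum) auto
    finally show ?thesis .
  qed
  then show "T_set nu a b c \<subseteq> {t. \<forall>i j k. (i \<in> {..<nu} \<and> j \<in> {..<nu} \<and> k \<in> {..<nu} \<longrightarrow>
      t i j k \<in> {..\<Sum>i<nu. \<Sum>j<nu. a i j}) \<and>
      (\<not> (i \<in> {..<nu} \<and> j \<in> {..<nu} \<and> k \<in> {..<nu}) \<longrightarrow> t i j k = 0)}"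
    by (auto simp: T_set_def)
qed simp_all

lemma mu_eq: "mu nu n a = (\<Prod>j<nu. fact (n j))\<^sup>2 / (\<Prod>i<nu. \<Prod>j<nu. fact (a i j))"
  by (simp add: mu_def prod_power_distrib)

lemma card_permutes_Collect:
  assumes "x permutes Omega"
  shows "card {w\<in>Omega. Q (x w)} = card {v\<in>Omega. Q v}"
proof -
  have "x ` {w\<in>Omega. Q (x w)} = {v\<in>Omega. Q v}"
    using permutes_inverses(1)[OF assms] permutes_in_image[OF assms]
      permutes_in_image[OF permutes_inv[OF assms]]
    by (auto intro: image_eqI[where x = "inv x _"])
  moreover have "inj_on x {w\<in>Omega. Q (x w)}"
    using permutes_inj[OF assms] by (rule inj_on_subset) simp
  ultimately show ?thesis
    using card_image by metis
qed

lemma finite_SN: "finite Omega \<Longrightarrow> finite (SN Omega)"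
  by (simp add: SN_def finite_permutations)

lemma xi_subset_SN: "xi Omega nu P a \<subseteq> SN Omega"
  by (auto simp: xi_def)

lemma gmult_apply:
  assumes "s \<in> SN Omega"
  shows "gmult Omega f g s = (\<Sum>x\<in>SN Omega. f x * g (s \<circ> inv x))"
proof -
  have "{(x, y). x \<in> SN Omega \<and> y \<in> SN Omega \<and> y \<circ> x = s} = (\<lambda>x. (x, s \<circ> inv x)) ` SN Omega"
  proof (intro set_eqI iffI)
    fix z assume "z \<in> {(x, y). x \<in> SN Omega \<and> y \<in> SN Omega \<and> y \<circ> x = s}"
    then obtain x y where "z = (x, y)" "x permutes Omega" "y \<circ> x = s"
      by (auto simp: SN_def)
    moreover from this have "y = s \<circ> inv x"
      by (metis comp_id o_assoc permutes_inv_o(1))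
    ultimately show "z \<in> (\<lambda>x. (x, s \<circ> inv x)) ` SN Omega"
      by (auto simp: SN_def)
  next
    fix z assume "z \<in> (\<lambda>x. (x, s \<circ> inv x)) ` SN Omega"
    then obtain x where z: "z = (x, s \<circ> inv x)" and x: "x permutes Omega"
      by (auto simp: SN_def)
    have "s \<circ> inv x \<in> SN Omega"
      using assms permutes_compose[OF permutes_inv[OF x]] by (simp add: SN_def)
    moreover have "(s \<circ> inv x) \<circ> x = s"
      by (simp add: comp_assoc permutes_inv_o(2)[OF x])
    ultimately show "z \<in> {(x, y). x \<in> SN Omega \<and> y \<in> SN Omega \<and> y \<circ> x = s}"
      using z x by (simp add: SN_def)
  qed
  moreover have "inj_on (\<lambda>x. (x, s \<circ> inv x)) (SN Omega)"
    by (rule inj_onI) simp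
  ultimately show ?thesis
    by (simp add: gmult_def sum.reindex)
qed

lemma gmult_apply_not_SN:
  assumes "s \<notin> SN Omega"
  shows "gmult Omega f g s = 0"
proof -
  have no_pairs: "{(x, y). x \<in> SN Omega \<and> y \<in> SN Omega \<and> y \<circ> x = s} = {}"
    using assms permutes_compose by (auto simp: SN_def)
  show ?thesis
    unfolding gmult_def no_pairs by simp
qed

section \<open>Double cosets of the Young subgroup\<close>

definition structure_constant ::
  "nat \<Rightarrow> (nat \<Rightarrow> nat) \<Rightarrow> (nat \<Rightarrow> nat \<Rightarrow> nat) \<Rightarrow> (nat \<Rightarrow> nat \<Rightarrow> nat) \<Rightarrow> (nat \<Rightarrow> nat \<Rightarrow> nat) \<Rightarrow> real"
where
  "structure_constant nu n a b c =
     (\<Prod>i<nu. \<Prod>j<nu. fact (a i j)) * (\<Prod>j<nu. \<Prod>k<nu. fact (b j k)) / (\<Prod>j<nu. fact (n j)) *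
     (\<Sum>t\<in>T_set nu a b c. 1 / (\<Prod>i<nu. \<Prod>j<nu. \<Prod>k<nu. fact (t i j k)))"

locale block_partition =
  fixes Omega :: "'a set" and nu :: nat and n :: "nat \<Rightarrow> nat" and P :: "nat \<Rightarrow> 'a set"
  assumes finite_Omega: "finite Omega"
    and Union_P: "(\<Union>j<nu. P j) = Omega"
    and disjoint_P: "\<forall>i<nu. \<forall>j<nu. i \<noteq> j \<longrightarrow> P i \<inter> P j = {}"
    and card_P: "\<forall>j<nu. card (P j) = n j"
begin

definition block :: "'a \<Rightarrow> nat" where
  "block w = (THE j. j < nu \<and> w \<in> P j)"

lemma block_eqI: "j < nu \<Longrightarrow> w \<in> P j \<Longrightarrow> block w = j"
  unfolding block_def using disjoint_P by (intro the_equality) blast+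

lemma block_less: "w \<in> Omega \<Longrightarrow> block w < nu"
  using Union_P block_eqI by blast

lemma P_eq: "j < nu \<Longrightarrow> P j = {w\<in>Omega. block w = j}"
  using Union_P block_eqI by blast

lemma card_block: "j < nu \<Longrightarrow> card {w\<in>Omega. block w = j} = n j"
  using card_P P_eq by simp

lemma sum_card_block:
  assumes "finite S" "g ` S \<subseteq> Omega"
  shows "(\<Sum>j<nu. card {w\<in>S. block (g w) = j}) = card S"
proof -
  have "(block \<circ> g) ` S \<subseteq> {..<nu}"
    using assms(2) block_less by auto
  then show ?thesis
    using sum.group[OF assms(1) finite_lessThan, where g = "block \<circ> g" and h = "\<lambda>_. 1 :: nat"] by simp
qed

definition dcoset_matrix :: "('a \<Rightarrow> 'a) \<Rightarrow> nat \<Rightarrow> nat \<Rightarrow> nat" where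
  "dcoset_matrix g i j = card {w\<in>Omega. block w = i \<and> block (g w) = j}"

(* The t_ijk of the factorisation of s into x followed by s o inv x. *)
definition joint_table :: "('a \<Rightarrow> 'a) \<Rightarrow> ('a \<Rightarrow> 'a) \<Rightarrow> nat \<Rightarrow> nat \<Rightarrow> nat \<Rightarrow> nat" where
  "joint_table s x i j k = card {w\<in>Omega. block w = i \<and> block (x w) = j \<and> block (s w) = k}"

lemma card_image_inter_P:
  assumes "g permutes Omega" "i < nu" "j < nu"
  shows "card (g ` P i \<inter> P j) = dcoset_matrix g i j"
proof -
  have "g ` P i \<inter> P j = g ` {w\<in>Omega. block w = i \<and> block (g w) = j}"
    using assms P_eq permutes_in_image[OF assms(1)] by auto
  moreover have "inj_on g {w\<in>Omega. block w = i \<and> block (g w) = j}"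
    using permutes_inj[OF assms(1)] by (rule inj_on_subset) simp
  ultimately show ?thesis
    by (simp add: card_image dcoset_matrix_def)
qed

lemma mem_xi_iff:
  "g \<in> xi Omega nu P a \<longleftrightarrow> g \<in> SN Omega \<and> (\<forall>i<nu. \<forall>j<nu. dcoset_matrix g i j = a i j)"
  using card_image_inter_P by (auto simp: xi_def SN_def)

lemma dcoset_matrix_eq_0:
  assumes "g permutes Omega" "\<not> (i < nu \<and> j < nu)"
  shows "dcoset_matrix g i j = 0"
proof -
  have empty: "{w\<in>Omega. block w = i \<and> block (g w) = j} = {}"
    using assms block_less permutes_in_image[OF assms(1)] by auto
  show ?thesis
    unfolding dcoset_matrix_def empty by simp
qed

lemma joint_table_eq_0:
  assumes "s permutes Omega" "x permutes Omega" "\<not> (i < nu \<and> j < nu \<and> k < nu)"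
  shows "joint_table s x i j k = 0"
proof -
  have empty: "{w\<in>Omega. block w = i \<and> block (x w) = j \<and> block (s w) = k} = {}"
    using assms block_less permutes_in_image[OF assms(1)] permutes_in_image[OF assms(2)] by auto
  show ?thesis
    unfolding joint_table_def empty by simp
qed

lemma dcoset_matrix_in_adm_set:
  assumes "g permutes Omega"
  shows "dcoset_matrix g \<in> adm_set nu n"
proof -
  have "(\<Sum>j<nu. dcoset_matrix g i j) = n i" if "i < nu" for i
  proof -
    have "(\<Sum>j<nu. dcoset_matrix g i j) = (\<Sum>j<nu. card {w\<in>{w\<in>Omega. block w = i}. block (g w) = j})"
      unfolding dcoset_matrix_def by (intro sum.cong refl arg_cong[where f = card]) auto
    also have "\<dots> = n i"
      using sum_card_block[of "{w\<in>Omega. block w = i}" g] finite_Omega permutes_in_image[OF assms]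
        card_block[OF that] by auto
    finally show ?thesis .
  qed
  moreover have "(\<Sum>i<nu. dcoset_matrix g i j) = n j" if "j < nu" for j
  proof -
    have "(\<Sum>i<nu. dcoset_matrix g i j) =
        (\<Sum>i<nu. card {w\<in>{w\<in>Omega. block (g w) = j}. block (id w) = i})"
      unfolding dcoset_matrix_def by (intro sum.cong refl arg_cong[where f = card]) auto
    also have "\<dots> = card {w\<in>Omega. block (g w) = j}"
      using sum_card_block[of "{w\<in>Omega. block (g w) = j}" id] finite_Omega by auto
    also have "\<dots> = n j"
      using card_permutes_Collect[OF assms, of "\<lambda>v. block v = j"] card_block[OF that] by simp
    finally show ?thesis .
  qed
  ultimately show ?thesis
    using dcoset_matrix_eq_0[OF assms] by (auto simp: adm_set_def admissible_def)
qed

lemma mem_xi_iff_dcoset_matrix: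
  assumes "g \<in> SN Omega" "c \<in> adm_set nu n"
  shows "g \<in> xi Omega nu P c \<longleftrightarrow> c = dcoset_matrix g"
proof -
  have "c i j = dcoset_matrix g i j" if "\<not> (i < nu \<and> j < nu)" for i j
    using assms that dcoset_matrix_eq_0[of g i j] by (auto simp: adm_set_def SN_def)
  then have "c = dcoset_matrix g \<longleftrightarrow> (\<forall>i<nu. \<forall>j<nu. dcoset_matrix g i j = c i j)"
    by (metis ext)
  then show ?thesis
    using assms(1) by (simp add: mem_xi_iff)
qed

lemma sum_joint_table_middle:
  assumes "x permutes Omega" "s permutes Omega"
  shows "(\<Sum>j<nu. joint_table s x i j k) = dcoset_matrix s i k"
proof -
  let ?S = "{w\<in>Omega. block w = i \<and> block (s w) = k}"
  have "(\<Sum>j<nu. joint_table s x i j k) = (\<Sum>j<nu. card {w\<in>?S. block (x w) = j})"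
    unfolding joint_table_def by (intro sum.cong refl arg_cong[where f = card]) auto
  also have "\<dots> = card ?S"
    using sum_card_block[of ?S x] finite_Omega permutes_in_image[OF assms(1)] by auto
  finally show ?thesis
    by (simp add: dcoset_matrix_def)
qed

lemma sum_joint_table_last:
  assumes "x permutes Omega" "s permutes Omega"
  shows "(\<Sum>k<nu. joint_table s x i j k) = dcoset_matrix x i j"
proof -
  let ?S = "{w\<in>Omega. block w = i \<and> block (x w) = j}"
  have "(\<Sum>k<nu. joint_table s x i j k) = (\<Sum>k<nu. card {w\<in>?S. block (s w) = k})"
    unfolding joint_table_def by (intro sum.cong refl arg_cong[where f = card]) auto
  also have "\<dots> = card ?S"
    using sum_card_block[of ?S s] finite_Omega permutes_in_image[OF assms(2)] by auto
  finally show ?thesis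
    by (simp add: dcoset_matrix_def)
qed

lemma sum_joint_table_first:
  assumes "x permutes Omega" "s permutes Omega"
  shows "(\<Sum>i<nu. joint_table s x i j k) = dcoset_matrix (s \<circ> inv x) j k"
proof -
  let ?S = "{w\<in>Omega. block (x w) = j \<and> block (s w) = k}"
  have "(\<Sum>i<nu. joint_table s x i j k) = (\<Sum>i<nu. card {w\<in>?S. block (id w) = i})"
    unfolding joint_table_def by (intro sum.cong refl arg_cong[where f = card]) auto
  also have "\<dots> = card ?S"
    using sum_card_block[of ?S id] finite_Omega by auto
  also have "\<dots> = card {v\<in>Omega. block v = j \<and> block ((s \<circ> inv x) v) = k}"
    using card_permutes_Collect[OF assms(1), of "\<lambda>v. block v = j \<and> block ((s \<circ> inv x) v) = k"]
      permutes_inverses(2)[OF assms(1)] by simp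
  finally show ?thesis
    by (simp add: dcoset_matrix_def)
qed

lemma factorization_iff_joint_table:
  assumes "s \<in> SN Omega" "x \<in> SN Omega"
  shows "x \<in> xi Omega nu P a \<and> s \<circ> inv x \<in> xi Omega nu P b \<longleftrightarrow>
    joint_table s x \<in> T_set nu a b (dcoset_matrix s)"
proof -
  have s: "s permutes Omega" and x: "x permutes Omega"
    using assms by (auto simp: SN_def)
  have "s \<circ> inv x \<in> SN Omega"
    using permutes_compose[OF permutes_inv[OF x] s] by (simp add: SN_def)
  then show ?thesis
    using assms(2) joint_table_eq_0[OF s x] sum_joint_table_first[OF x s]
      sum_joint_table_middle[OF x s] sum_joint_table_last[OF x s]
    by (auto simp: T_set_def mem_xi_iff)
qed

lemma joint_table_fibre_eq:
  assumes "s permutes Omega" and t_eq_0: "\<forall>i j k. \<not> (i < nu \<and> j < nu \<and> k < nu) \<longrightarrow> t i j k = 0"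
  shows "{x\<in>SN Omega. joint_table s x = t} =
    table_bijections Omega Omega (\<lambda>w. (block w, block (s w))) block ({..<nu} \<times> {..<nu}) {..<nu}
      (\<lambda>((i, k), j). t i j k)"
proof (intro set_eqI)
  fix x
  have "joint_table s x = t \<longleftrightarrow> (\<forall>i<nu. \<forall>j<nu. \<forall>k<nu. joint_table s x i j k = t i j k)"
    if "x permutes Omega"
  proof (intro iffI ext)
    fix i j k
    assume "\<forall>i<nu. \<forall>j<nu. \<forall>k<nu. joint_table s x i j k = t i j k"
    then show "joint_table s x i j k = t i j k"
      using joint_table_eq_0[OF assms(1) that, of i j k] t_eq_0
      by (cases "i < nu \<and> j < nu \<and> k < nu") auto
  qed simp
  then show "x \<in> {x\<in>SN Omega. joint_table s x = t} \<longleftrightarrow>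
      x \<in> table_bijections Omega Omega (\<lambda>w. (block w, block (s w))) block ({..<nu} \<times> {..<nu}) {..<nu}
        (\<lambda>((i, k), j). t i j k)"
    by (auto simp: SN_def permutes_altdef table_bijections_def joint_table_def
        conj_commute conj_left_commute)
qed

lemma card_joint_table_fibre:
  assumes "s \<in> SN Omega" "admissible nu n b" "t \<in> T_set nu a b (dcoset_matrix s)"
  shows "real (card {x\<in>SN Omega. joint_table s x = t}) =
    (\<Prod>i<nu. \<Prod>k<nu. fact (dcoset_matrix s i k)) * (\<Prod>j<nu. fact (n j)) /
    (\<Prod>i<nu. \<Prod>j<nu. \<Prod>k<nu. fact (t i j k))"
proof -
  have s: "s permutes Omega"
    using assms(1) by (simp add: SN_def)
  define l where "l w = (block w, block (s w))" for w
  define I where "I = {..<nu} \<times> {..<nu}"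
  define t' where "t' = (\<lambda>((i, k), j). t i j k)"
  have pairs: "(\<Prod>\<alpha>\<in>{..<nu} \<times> {..<nu}. G \<alpha>) = (\<Prod>i<nu. \<Prod>k<nu. G (i, k))"
    for G :: "nat \<times> nat \<Rightarrow> real"
    by (simp add: prod.cartesian_product)
  have "real (card (table_bijections Omega Omega l block I {..<nu} t')) =
      (\<Prod>\<alpha>\<in>I. fact (card {w\<in>Omega. l w = \<alpha>})) * (\<Prod>j<nu. fact (card {w\<in>Omega. block w = j})) /
      (\<Prod>\<gamma>\<in>I \<times> {..<nu}. fact (t' \<gamma>))"
  proof (rule card_table_bijections)
    show "l ` Omega \<subseteq> I" "block ` Omega \<subseteq> {..<nu}"
      using block_less permutes_in_image[OF s] by (auto simp: l_def I_def)
    have "(\<Sum>j<nu. t' ((i, k), j)) = card {w\<in>Omega. l w = (i, k)}" if "i < nu" "k < nu" for i k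
      using assms(3) that by (simp add: t'_def l_def T_set_def dcoset_matrix_def)
    then show "\<forall>\<alpha>\<in>I. (\<Sum>j<nu. t' (\<alpha>, j)) = card {w\<in>Omega. l w = \<alpha>}"
      by (auto simp: I_def)
    have "(\<Sum>\<alpha>\<in>I. t' (\<alpha>, j)) = (\<Sum>k<nu. \<Sum>i<nu. t i j k)" for j
    proof -
      have "(\<Sum>\<alpha>\<in>I. t' (\<alpha>, j)) = (\<Sum>i<nu. \<Sum>k<nu. t i j k)"
        unfolding I_def sum.cartesian_product by (simp add: t'_def split_beta)
      also have "\<dots> = (\<Sum>k<nu. \<Sum>i<nu. t i j k)"
        by (rule sum.swap)
      finally show ?thesis .
    qed
    then show "\<forall>j\<in>{..<nu}. (\<Sum>\<alpha>\<in>I. t' (\<alpha>, j)) = card {w\<in>Omega. block w = j}"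
      using assms(2,3) by (simp add: T_set_def admissible_def card_block)
  qed (use finite_Omega in \<open>simp_all add: I_def\<close>)
  moreover have "(\<Prod>\<gamma>\<in>I \<times> {..<nu}. fact (t' \<gamma>)) = (\<Prod>i<nu. \<Prod>j<nu. \<Prod>k<nu. fact (t i j k) :: real)"
  proof -
    have "(\<Prod>\<gamma>\<in>I \<times> {..<nu}. fact (t' \<gamma>) :: real) = (\<Prod>\<alpha>\<in>I. \<Prod>j<nu. fact (t' (\<alpha>, j)))"
      by (simp add: prod.cartesian_product)
    also have "\<dots> = (\<Prod>i<nu. \<Prod>k<nu. \<Prod>j<nu. fact (t i j k))"
      unfolding I_def pairs by (simp add: t'_def)
    also have "\<dots> = (\<Prod>i<nu. \<Prod>j<nu. \<Prod>k<nu. fact (t i j k))"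
      by (intro prod.cong refl prod.swap)
    finally show ?thesis .
  qed
  moreover have "{x\<in>SN Omega. joint_table s x = t} = table_bijections Omega Omega l block I {..<nu} t'"
    unfolding l_def I_def t'_def using joint_table_fibre_eq[OF s] assms(3) by (simp add: T_set_def)
  ultimately show ?thesis
    unfolding I_def by (simp add: pairs l_def dcoset_matrix_def card_block)
qed

lemma card_factorizations:
  assumes "s \<in> SN Omega" "admissible nu n b"
  shows "real (card {x\<in>xi Omega nu P a. s \<circ> inv x \<in> xi Omega nu P b}) =
    (\<Prod>i<nu. \<Prod>k<nu. fact (dcoset_matrix s i k)) * (\<Prod>j<nu. fact (n j)) *
    (\<Sum>t\<in>T_set nu a b (dcoset_matrix s). 1 / (\<Prod>i<nu. \<Prod>j<nu. \<Prod>k<nu. fact (t i j k)))"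
proof -
  let ?T = "T_set nu a b (dcoset_matrix s)"
  let ?X = "{x\<in>SN Omega. joint_table s x \<in> ?T}"
  have "{x\<in>xi Omega nu P a. s \<circ> inv x \<in> xi Omega nu P b} = ?X"
    using factorization_iff_joint_table[OF assms(1)] xi_subset_SN by blast
  moreover have "card ?X = (\<Sum>t\<in>?T. card {x\<in>SN Omega. joint_table s x = t})"
  proof -
    have "finite ?X"
      using finite_SN[OF finite_Omega] by simp
    then have "card ?X = (\<Sum>t\<in>?T. card {x\<in>?X. joint_table s x = t})"
      using sum.group[where S = ?X and T = ?T and g = "joint_table s" and h = "\<lambda>_. 1 :: nat"]
        finite_T_set by (simp add: image_subset_iff)
    also have "\<dots> = (\<Sum>t\<in>?T. card {x\<in>SN Omega. joint_table s x = t})"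
      by (intro sum.cong refl arg_cong[where f = card]) auto
    finally show ?thesis .
  qed
  ultimately show ?thesis
    using card_joint_table_fibre[OF assms] by (simp add: sum_distrib_left)
qed

lemma gmult_Xi_Xi_apply:
  assumes "s \<in> SN Omega" "admissible nu n b"
  shows "gmult Omega (Xi Omega nu n P a) (Xi Omega nu n P b) s =
    complex_of_real (structure_constant nu n a b (dcoset_matrix s)) *
    Xi Omega nu n P (dcoset_matrix s) s"
proof -
  let ?X = "{x\<in>xi Omega nu P a. s \<circ> inv x \<in> xi Omega nu P b}"
  define N :: real where "N = (\<Prod>j<nu. fact (n j))"
  define C :: real where "C = (\<Prod>i<nu. \<Prod>k<nu. fact (dcoset_matrix s i k))"
  have "gmult Omega (Xi Omega nu n P a) (Xi Omega nu n P b) s =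
      (\<Sum>x\<in>SN Omega. if x \<in> ?X then complex_of_real (1 / (mu nu n a * mu nu n b)) else 0)"
    unfolding gmult_apply[OF assms(1)] by (intro sum.cong refl) (simp add: Xi_def)
  also have "\<dots> = (\<Sum>x\<in>SN Omega \<inter> ?X. complex_of_real (1 / (mu nu n a * mu nu n b)))"
    by (rule sum.inter_restrict[symmetric, OF finite_SN[OF finite_Omega]])
  also have "SN Omega \<inter> ?X = ?X"
    using xi_subset_SN by blast
  also have "(\<Sum>x\<in>?X. complex_of_real (1 / (mu nu n a * mu nu n b))) =
      complex_of_real (real (card ?X) / (mu nu n a * mu nu n b))"
    by simp
  finally have gmult_eq: "gmult Omega (Xi Omega nu n P a) (Xi Omega nu n P b) s =
      complex_of_real (real (card ?X) / (mu nu n a * mu nu n b))" .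
  have "real (card ?X) / (mu nu n a * mu nu n b) =
      structure_constant nu n a b (dcoset_matrix s) * (1 / (N\<^sup>2 / C))"
    unfolding card_factorizations[OF assms] mu_eq structure_constant_def
      N_def[symmetric] C_def[symmetric]
    by (simp add: N_def C_def field_simps power2_eq_square)
  moreover have "Xi Omega nu n P (dcoset_matrix s) s = complex_of_real (1 / (N\<^sup>2 / C))"
    using mem_xi_iff_dcoset_matrix[OF assms(1)] dcoset_matrix_in_adm_set assms(1)
    by (simp add: Xi_def mu_eq N_def C_def SN_def)
  ultimately show ?thesis
    unfolding gmult_eq by (simp only: of_real_mult)
qed

lemma sum_adm_set_Xi_apply:
  assumes "s \<in> SN Omega"
  shows "(\<Sum>c\<in>adm_set nu n. K c * Xi Omega nu n P c s) =
    K (dcoset_matrix s) * Xi Omega nu n P (dcoset_matrix s) s"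
proof -
  have "dcoset_matrix s \<in> adm_set nu n"
    using assms dcoset_matrix_in_adm_set by (simp add: SN_def)
  moreover have "Xi Omega nu n P c s = 0" if "c \<in> adm_set nu n" "c \<noteq> dcoset_matrix s" for c
    using mem_xi_iff_dcoset_matrix[OF assms that(1)] that(2) by (simp add: Xi_def)
  ultimately show ?thesis
    by (subst sum.remove[OF finite_adm_set]) (auto intro: sum.neutral)
qed

end

theorem proposition1:
  fixes Omega :: "'a set" and nu :: nat and n :: "nat \<Rightarrow> nat" and P :: "nat \<Rightarrow> 'a set"
    and a b :: "nat \<Rightarrow> nat \<Rightarrow> nat"
  assumes "nu \<ge> 1"
    and "finite Omega"
    and "\<forall>j<nu. P j \<subseteq> Omega"
    and "(\<Union>j<nu. P j) = Omega"
    and "\<forall>i<nu. \<forall>j<nu. i \<noteq> j \<longrightarrow> P i \<inter> P j = {}"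
    and "\<forall>j<nu. card (P j) = n j"
    and "admissible nu n a" and "admissible nu n b"
  shows "gmult Omega (Xi Omega nu n P a) (Xi Omega nu n P b) =
    (\<lambda>g. \<Sum>c \<in> adm_set nu n.
       complex_of_real
         ((\<Prod>i<nu. \<Prod>j<nu. fact (a i j)) * (\<Prod>j<nu. \<Prod>k<nu. fact (b j k)) / (\<Prod>j<nu. fact (n j))
          * (\<Sum>t \<in> T_set nu a b c. 1 / (\<Prod>i<nu. \<Prod>j<nu. \<Prod>k<nu. fact (t i j k))))
       * Xi Omega nu n P c g)"
proof -
  interpret block_partition Omega nu n P
    using assms(2,4-6) by unfold_locales
  have "gmult Omega (Xi Omega nu n P a) (Xi Omega nu n P b) s =
      (\<Sum>c\<in>adm_set nu n. complex_of_real (structure_constant nu n a b c) * Xi Omega nu n P c s)" for s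
  proof (cases "s \<in> SN Omega")
    case True
    then show ?thesis
      using gmult_Xi_Xi_apply[OF True assms(8)] sum_adm_set_Xi_apply[OF True] by simp
  next
    case False
    then show ?thesis
      by (simp add: gmult_apply_not_SN Xi_def xi_def)
  qed
  then show ?thesis
    by (simp add: fun_eq_iff structure_constant_def)
qed

end
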